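(* Let $m\ge2$ and $n\ge m$. For every $\epsilon$ with $0<\epsilon\le 1/2$, there is no proportional mechanism $(A,p)$ for the job scheduling problem over the set $\mathcal{C}$ of general instances with $m$ machines and $n$ jobs such that $A$ gives a $(3/2-\epsilon)$-approximation to the optimal makespan.
   Context: Notation: $[k]=\{1,\dots,k\}$. There are $m$ machines $[m]$ and $n$ jobs $[n]$. An instance is a matrix $c\in\mathbb{R}_{\ge0}^{m\times n}$; for $S\subseteq[n]$, $c_i(S)=\sum_{j\in S}c_{i,j}$. The set of general instances is $\mathcal{C}=\mathbb{R}_{\ge0}^{m\times n}$. An allocation is a tuple $(X_1,\dots,X_m)$ of pairwise disjoint subsets of $[n]$ whose union is $[n]$. A mechanism $(A,p)$ over a set of instances $\mathcal{I}$ assigns to each $c\in\mathcal{I}$ an allocation $A(c)$ and payments $p(c)\in\mathbb{R}^m$ (written $A_i,p_i$). The mechanism is proportional if for every $c\in\mathcal{I}$ and $i\in[m]$: $c_i(A_i)-p_i\le \frac1m\sum_{j\in[m]}(c_i(A_j)-p_j)$. $\mathrm{OPT}(c)=\min_X\max_{i\in[m]}c_i(X_i)$ over all allocations $X$. An allocation function $A$ gives a $\beta$-approximation to the optimal makespan if $\max_{i}c_i(A(c)_i)\le\beta\,\mathrm{OPT}(c)$ for all $c\in\mathcal{I}$. *)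

theory Defs
  imports Complex_Main
begin

text \<open>An instance is a cost matrix
  c :: nat => nat => real, c i j = cost of job j on machine i.
  The set C of general instances: nonnegative entries on [m]x[n]; entries outside
  the index range are fixed to 0 so that instances correspond one-to-one to matrices.\<close>

definition instances :: "nat \<Rightarrow> nat \<Rightarrow> (nat \<Rightarrow> nat \<Rightarrow> real) set" where
  "instances m n = {c. (\<forall>i<m. \<forall>j<n. 0 \<le> c i j) \<and>
                       (\<forall>i j. (i \<ge> m \<or> j \<ge> n) \<longrightarrow> c i j = 0)}"

definition cost :: "(nat \<Rightarrow> nat \<Rightarrow> real) \<Rightarrow> nat \<Rightarrow> nat set \<Rightarrow> real" where
  "cost c i S = (\<Sum>j\<in>S. c i j)"

definition is_allocation :: "nat \<Rightarrow> nat \<Rightarrow> (nat \<Rightarrow> nat set) \<Rightarrow> bool" where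
  "is_allocation m n X \<longleftrightarrow>
     (\<forall>i<m. \<forall>k<m. i \<noteq> k \<longrightarrow> X i \<inter> X k = {}) \<and> (\<Union>i<m. X i) = {0..<n}"

definition makespan :: "nat \<Rightarrow> (nat \<Rightarrow> nat \<Rightarrow> real) \<Rightarrow> (nat \<Rightarrow> nat set) \<Rightarrow> real" where
  "makespan m c X = Max ((\<lambda>i. cost c i (X i)) ` {0..<m})"

definition OPT :: "nat \<Rightarrow> nat \<Rightarrow> (nat \<Rightarrow> nat \<Rightarrow> real) \<Rightarrow> real" where
  "OPT m n c = Inf {makespan m c X | X. is_allocation m n X}"

text \<open>A mechanism (A,p) over the instance set I: A c is an allocation, p c i the payment
  of machine i. Proportionality: c_i(A_i) - p_i <= (1/m) * sum_j (c_i(A_j) - p_j).\<close>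
definition proportional ::
  "nat \<Rightarrow> (nat \<Rightarrow> nat \<Rightarrow> real) set \<Rightarrow> ((nat \<Rightarrow> nat \<Rightarrow> real) \<Rightarrow> nat \<Rightarrow> nat set)
     \<Rightarrow> ((nat \<Rightarrow> nat \<Rightarrow> real) \<Rightarrow> nat \<Rightarrow> real) \<Rightarrow> bool" where
  "proportional m I A p \<longleftrightarrow>
     (\<forall>c\<in>I. \<forall>i<m. cost c i (A c i) - p c i
        \<le> (1 / real m) * (\<Sum>j<m. cost c i (A c j) - p c j))"

definition approx :: "nat \<Rightarrow> nat \<Rightarrow> (nat \<Rightarrow> nat \<Rightarrow> real) set \<Rightarrow>
     ((nat \<Rightarrow> nat \<Rightarrow> real) \<Rightarrow> nat \<Rightarrow> nat set) \<Rightarrow> real \<Rightarrow> bool" where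
  "approx m n I A \<beta> \<longleftrightarrow> (\<forall>c\<in>I. makespan m c (A c) \<le> \<beta> * OPT m n c)"

end

theory Submission
  imports Defs
begin

text \<open>Take b slightly below 3/2 and the instance in which machine i costs 1 for job i,
  while for every pair of distinct machines i, j < m one of the costs c i j, c j i is b and the
  other b - 1; all remaining jobs cost nothing. The allocation giving every machine its own
  job has makespan 1, and every other allocation puts a job of cost at least b on some
  machine, so a (3/2 - \<epsilon>)-approximation must choose the diagonal allocation, in which the
  machines' total cost is m. Summing the proportionality inequalities over all machines,
  the payments cancel and the total cost is at most (1/m) \<Sum>i. c i [n]. Since every pair of
  off-diagonal entries sums to 2b - 1 < 2, this is less than m: a contradiction.\<close>

lemma instances_nonneg: "c \<in> instances m n \<Longrightarrow> 0 \<le> c i j"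
  unfolding instances_def by (cases "i < m \<and> j < n") auto

lemma cost_nonneg: "(\<And>l. 0 \<le> c i l) \<Longrightarrow> 0 \<le> cost c i S"
  unfolding cost_def by (simp add: sum_nonneg)

lemma member_le_cost:
  assumes "\<And>l. 0 \<le> c i l" "finite S" "p \<in> S"
  shows "c i p \<le> cost c i S"
  unfolding cost_def using assms by (intro member_le_sum) auto

lemma two_members_le_cost:
  assumes "\<And>l. 0 \<le> c i l" "finite S" "p \<in> S" "q \<in> S" "p \<noteq> q"
  shows "c i p + c i q \<le> cost c i S"
proof -
  have "c i p + c i q = sum (c i) {p, q}" using assms by simp
  also have "\<dots> \<le> sum (c i) S" using assms by (intro sum_mono2) auto
  finally show ?thesis unfolding cost_def .
qed

lemma is_allocation_finite:
  assumes "is_allocation m n X" "k < m"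
  shows "finite (X k)"
proof -
  have "X k \<subseteq> {0..<n}" using assms unfolding is_allocation_def by blast
  then show ?thesis using finite_subset by blast
qed

lemma is_allocation_covers:
  assumes "is_allocation m n X" "j < n"
  obtains k where "k < m" "j \<in> X k"
  using assms unfolding is_allocation_def by (metis UN_E atLeastLessThan_iff lessThan_iff zero_le)

lemma sum_cost_allocation:
  assumes "is_allocation m n X"
  shows "(\<Sum>k<m. cost c i (X k)) = (\<Sum>l<n. c i l)"
proof -
  have "(\<Sum>k<m. cost c i (X k)) = sum (c i) (\<Union>(X ` {..<m}))"
    unfolding cost_def using assms is_allocation_finite[OF assms]
    by (subst sum.UNION_disjoint) (auto simp: is_allocation_def)
  also have "\<Union>(X ` {..<m}) = {..<n}"
    using assms unfolding is_allocation_def by auto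
  finally show ?thesis .
qed

lemma proportional_total_cost_le:
  assumes "m > 0" "is_allocation m n X"
    and "\<forall>i<m. cost c i (X i) - p i \<le> (1 / real m) * (\<Sum>k<m. cost c i (X k) - p k)"
  shows "(\<Sum>i<m. cost c i (X i)) \<le> (1 / real m) * (\<Sum>i<m. \<Sum>l<n. c i l)"
proof -
  define P where "P = (\<Sum>k<m. p k)"
  have "(\<Sum>i<m. cost c i (X i)) - P
      \<le> (\<Sum>i<m. (1 / real m) * (\<Sum>k<m. cost c i (X k) - p k))"
    using assms(3) unfolding P_def sum_subtractf[symmetric] by (intro sum_mono) auto
  also have "\<dots> = (\<Sum>i<m. (1 / real m) * ((\<Sum>l<n. c i l) - P))"
    using sum_cost_allocation[OF assms(2)] by (simp add: sum_subtractf P_def)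
  also have "\<dots> = (1 / real m) * (\<Sum>i<m. \<Sum>l<n. c i l) - P"
    using assms(1) by (simp add: sum_subtractf sum_divide_distrib right_diff_distrib)
  finally show ?thesis by simp
qed

lemma cost_le_makespan: "k < m \<Longrightarrow> cost c k (X k) \<le> makespan m c X"
  unfolding makespan_def by (intro Max_ge) auto

lemma OPT_le_makespan:
  assumes "c \<in> instances m n" "m > 0" "is_allocation m n X"
  shows "OPT m n c \<le> makespan m c X"
  unfolding OPT_def
proof (rule cInf_lower)
  show "makespan m c X \<in> {makespan m c X |X. is_allocation m n X}" using assms(3) by blast
  show "bdd_below {makespan m c X |X. is_allocation m n X}"
  proof (rule bdd_belowI[of _ 0])
    fix x assume "x \<in> {makespan m c X |X. is_allocation m n X}"
    then obtain Y where x: "x = makespan m c Y" by blast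
    have "0 \<le> cost c 0 (Y 0)" using instances_nonneg[OF assms(1)] by (rule cost_nonneg)
    also have "\<dots> \<le> x" unfolding x using assms(2) by (rule cost_le_makespan)
    finally show "0 \<le> x" .
  qed
qed

definition diagonal_allocation :: "nat \<Rightarrow> nat \<Rightarrow> nat \<Rightarrow> nat set" where
  "diagonal_allocation m n i = (if i = 0 then insert 0 {m..<n} else {i})"

lemma is_allocation_diagonal:
  assumes "0 < m" "m \<le> n"
  shows "is_allocation m n (diagonal_allocation m n)"
proof -
  have "j \<in> (\<Union>i<m. diagonal_allocation m n i)" if "j < n" for j
    using that assms
    by (cases "j < m") (auto simp: diagonal_allocation_def intro: UN_I[of j] UN_I[of 0])
  then have "(\<Union>i<m. diagonal_allocation m n i) = {0..<n}"
    using assms by (auto simp: diagonal_allocation_def split: if_splits)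
  then show ?thesis unfolding is_allocation_def by (auto simp: diagonal_allocation_def)
qed

definition staircase_instance :: "nat \<Rightarrow> real \<Rightarrow> nat \<Rightarrow> nat \<Rightarrow> real" where
  "staircase_instance m b i j =
     (if i < m \<and> j < m
      then (if i = j then 1 else if j = 0 \<or> (0 < i \<and> i < j) then b else b - 1)
      else 0)"

lemma staircase_instance_in_instances:
  "1 \<le> b \<Longrightarrow> m \<le> n \<Longrightarrow> staircase_instance m b \<in> instances m n"
  by (auto simp: instances_def staircase_instance_def)

lemma OPT_staircase_instance_le_1:
  assumes "1 \<le> b" "0 < m" "m \<le> n"
  shows "OPT m n (staircase_instance m b) \<le> 1"
proof -
  let ?c = "staircase_instance m b" and ?X = "diagonal_allocation m n"
  have "cost ?c i (?X i) = 1" if "i < m" for i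
  proof -
    have "sum (?c 0) {m..<n} = 0" by (intro sum.neutral) (auto simp: staircase_instance_def)
    then show ?thesis
      using that by (auto simp: cost_def diagonal_allocation_def staircase_instance_def)
  qed
  then have "(\<lambda>i. cost ?c i (?X i)) ` {0..<m} = {1}" using assms(2) by force
  then have "makespan m ?c ?X = 1" unfolding makespan_def by simp
  then show ?thesis
    using OPT_le_makespan[OF staircase_instance_in_instances[OF assms(1,3)] assms(2)
        is_allocation_diagonal[OF assms(2,3)]] by simp
qed

text \<open>Jobs are placed from the highest index down: when job j sits on a machine k \<noteq> j,
  either it costs b there, or k already carries its own job (k = 0 or k > j) and the two
  jobs together cost 1 + (b - 1) = b.\<close>

lemma staircase_low_loads_force_diagonal:
  assumes "is_allocation m n X" "m \<le> n" "1 \<le> b"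
    and low: "\<And>k. k < m \<Longrightarrow> cost (staircase_instance m b) k (X k) < b"
  shows "j < m \<Longrightarrow> j \<in> X j"
proof -
  let ?c = "staircase_instance m b"
  have nonneg: "\<And>k l. 0 \<le> ?c k l" using assms(3) by (simp add: staircase_instance_def)
  have own_job_0: "0 \<in> X 0" if m_pos: "0 < m"
  proof -
    obtain k where k: "k < m" "0 \<in> X k"
      by (rule is_allocation_covers[OF assms(1), of 0]) (use m_pos assms(2) in auto)
    have "?c k 0 \<le> cost ?c k (X k)"
      using member_le_cost[of ?c k, OF nonneg[of k] is_allocation_finite[OF assms(1) k(1)] k(2)] .
    then show ?thesis using low[OF k(1)] k by (cases "k = 0") (auto simp: staircase_instance_def)
  qed
  show "j < m \<Longrightarrow> j \<in> X j"
  proof (induction "m - j" arbitrary: j rule: less_induct)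
    case less
    obtain k where k: "k < m" "j \<in> X k"
      using is_allocation_covers[OF assms(1), of j] less.prems assms(2) by auto
    have fin: "finite (X k)" using is_allocation_finite[OF assms(1) k(1)] .
    show "j \<in> X j"
    proof (rule ccontr)
      assume "j \<notin> X j"
      then have "k \<noteq> j" "j \<noteq> 0" using k own_job_0 less.prems by (metis gr_zeroI)+
      have "k \<in> X k" if "k = 0 \<or> j < k"
        using that own_job_0 k less.hyps[of k] by auto
      then have "b \<le> cost ?c k (X k)"
        using two_members_le_cost[of ?c k, OF nonneg[of k] fin, of k j]
          member_le_cost[of ?c k, OF nonneg[of k] fin k(2)] \<open>k \<noteq> j\<close> \<open>j \<noteq> 0\<close> k less.prems
        by (cases "k = 0 \<or> j < k") (auto simp: staircase_instance_def)
      then show False using low[OF k(1)] by simp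
    qed
  qed
qed

lemma staircase_instance_total_cost_lt:
  assumes "b < 3/2" "2 \<le> m" "m \<le> n"
  shows "(\<Sum>i<m. \<Sum>l<n. staircase_instance m b i l) < real m * real m"
proof -
  let ?c = "staircase_instance m b"
  have pair_le: "?c i l + ?c l i \<le> 2" if "i < m" "l < m" for i l
    using that assms(1) by (auto simp: staircase_instance_def)
  have "(\<Sum>l<n. ?c i l) = (\<Sum>l<m. ?c i l)" for i
    using assms(3) by (intro sum.mono_neutral_right) (auto simp: staircase_instance_def)
  then have "2 * (\<Sum>i<m. \<Sum>l<n. ?c i l) = (\<Sum>i<m. \<Sum>l<m. ?c i l + ?c l i)"
    using sum.swap[of "\<lambda>i l. ?c l i" "{..<m}" "{..<m}"] by (simp add: sum.distrib)
  also have "\<dots> < (\<Sum>i<m. \<Sum>l<m. 2)"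
  proof (rule sum_strict_mono_ex1)
    show "\<forall>i\<in>{..<m}. (\<Sum>l<m. ?c i l + ?c l i) \<le> (\<Sum>l<m. 2)"
      using pair_le by (intro ballI sum_mono) auto
    have "?c 0 1 + ?c 1 0 < 2" using assms(1,2) by (simp add: staircase_instance_def)
    then have "(\<Sum>l<m. ?c 0 l + ?c l 0) < (\<Sum>l<m. 2)"
      using pair_le assms(2) by (intro sum_strict_mono_ex1[of "{..<m}"]) auto
    then show "\<exists>i\<in>{..<m}. (\<Sum>l<m. ?c i l + ?c l i) < (\<Sum>l<m. 2)"
      using assms(2) by (intro bexI[of _ 0]) auto
  qed simp
  finally show ?thesis by simp
qed

theorem theorem2:
  fixes m n :: nat and \<epsilon> :: real
  assumes "m \<ge> 2" and "n \<ge> m" and "0 < \<epsilon>" and "\<epsilon> \<le> 1/2"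
  shows "\<not> (\<exists>A p. (\<forall>c\<in>instances m n. is_allocation m n (A c)) \<and>
                   proportional m (instances m n) A p \<and>
                   approx m n (instances m n) A (3/2 - \<epsilon>))"
proof
  assume "\<exists>A p. (\<forall>c\<in>instances m n. is_allocation m n (A c)) \<and>
                   proportional m (instances m n) A p \<and>
                   approx m n (instances m n) A (3/2 - \<epsilon>)"
  then obtain A p where alloc: "\<forall>c\<in>instances m n. is_allocation m n (A c)"
    and prop_A: "proportional m (instances m n) A p"
    and apx: "approx m n (instances m n) A (3/2 - \<epsilon>)" by blast
  define b where "b = 3/2 - \<epsilon>/2"
  define c where "c = staircase_instance m b"
  have b: "1 \<le> b" "b < 3/2" and m: "0 < m" using assms by (auto simp: b_def)
  have c: "c \<in> instances m n"
    unfolding c_def using b(1) assms(2) by (rule staircase_instance_in_instances)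
  have X: "is_allocation m n (A c)" using alloc c by blast
  have "makespan m c (A c) \<le> (3/2 - \<epsilon>) * OPT m n c" using apx c by (simp add: approx_def)
  also have "\<dots> \<le> 3/2 - \<epsilon>"
    using OPT_staircase_instance_le_1[OF b(1) m assms(2)] assms(4) by (simp add: c_def mult_left_le)
  finally have "cost c k (A c k) < b" if "k < m" for k
    using cost_le_makespan[OF that, of c "A c"] assms(3) by (simp add: b_def)
  then have "\<And>j. j < m \<Longrightarrow> j \<in> A c j"
    using staircase_low_loads_force_diagonal[OF X assms(2) b(1)] by (simp add: c_def)
  then have "(\<Sum>i<m. c i i) \<le> (\<Sum>i<m. cost c i (A c i))"
    using instances_nonneg[OF c] is_allocation_finite[OF X] by (intro sum_mono member_le_cost) auto
  also have "\<dots> \<le> (1 / real m) * (\<Sum>i<m. \<Sum>l<n. c i l)"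
    using prop_A c by (intro proportional_total_cost_le[OF m X, where p = "p c"]) (simp add: proportional_def)
  also have "\<dots> < real m"
    using staircase_instance_total_cost_lt[OF b(2) assms(1,2)] m by (simp add: c_def field_simps)
  finally show False by (simp add: c_def staircase_instance_def)
qed

end
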